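(* Let $E$ be a Banach lattice. A bounded set $A \subset E$ is almost limited if and only if $T(A)$ is relatively compact in $c_0$ for every disjoint operator $T: E \to c_0$.
   Context: A bounded subset $A$ of a Banach lattice $E$ is almost limited if every disjoint weak* null sequence $(x_n')$ in the dual Banach lattice $E'$ converges uniformly to zero on $A$, i.e. $\sup_{x \in A}|x_n'(x)| \to 0$. Every bounded linear operator $T: E \to c_0$ has the form $T(x) = (x_n'(x))_n$ for a unique weak* null sequence $(x_n') \subset E'$; $T$ is a disjoint operator if $(x_n')$ is disjoint in $E'$. *)

theory Defs
  imports "HOL-Analysis.Analysis"
begin

class banach_lattice = banach + lattice + ordered_real_vector +
  assumes lattice_norm: "sup x (- x) \<le> sup y (- y) \<Longrightarrow> norm x \<le> norm y"

text \<open>Elements of the dual E' are bounded linear functionals E \<Rightarrow> real,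
ordered by the dual cone: f \<le> g iff f x \<le> g x for all x \<ge> 0.\<close>
definition dual_le :: "('a::banach_lattice \<Rightarrow> real) \<Rightarrow> ('a \<Rightarrow> real) \<Rightarrow> bool" where
  "dual_le f g \<longleftrightarrow> (\<forall>x. 0 \<le> x \<longrightarrow> f x \<le> g x)"

definition dual_is_sup :: "('a::banach_lattice \<Rightarrow> real) \<Rightarrow> ('a \<Rightarrow> real) \<Rightarrow> ('a \<Rightarrow> real) \<Rightarrow> bool" where
  "dual_is_sup f g h \<longleftrightarrow> bounded_linear h \<and> dual_le f h \<and> dual_le g h \<and>
     (\<forall>k. bounded_linear k \<and> dual_le f k \<and> dual_le g k \<longrightarrow> dual_le h k)"

definition dual_is_inf :: "('a::banach_lattice \<Rightarrow> real) \<Rightarrow> ('a \<Rightarrow> real) \<Rightarrow> ('a \<Rightarrow> real) \<Rightarrow> bool" where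
  "dual_is_inf f g h \<longleftrightarrow> bounded_linear h \<and> dual_le h f \<and> dual_le h g \<and>
     (\<forall>k. bounded_linear k \<and> dual_le k f \<and> dual_le k g \<longrightarrow> dual_le k h)"

definition dual_disjoint :: "('a::banach_lattice \<Rightarrow> real) \<Rightarrow> ('a \<Rightarrow> real) \<Rightarrow> bool" where
  "dual_disjoint f g \<longleftrightarrow> (\<exists>a b. dual_is_sup f (\<lambda>x. - f x) a \<and> dual_is_sup g (\<lambda>x. - g x) b
      \<and> dual_is_inf a b (\<lambda>x. 0))"

definition almost_limited :: "'a::banach_lattice set \<Rightarrow> bool" where
  "almost_limited A \<longleftrightarrow> bounded A \<and>
    (\<forall>x' :: nat \<Rightarrow> 'a \<Rightarrow> real.
       (\<forall>n. bounded_linear (x' n)) \<and>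
       (\<forall>x. (\<lambda>n. x' n x) \<longlonglongrightarrow> 0) \<and>
       (\<forall>n m. n \<noteq> m \<longrightarrow> dual_disjoint (x' n) (x' m))
       \<longrightarrow> (\<forall>\<epsilon>>0. \<exists>N. \<forall>n\<ge>N. \<forall>x\<in>A. \<bar>x' n x\<bar> < \<epsilon>))"

text \<open>c_0 is realized as the closed subspace of l^\<infinity> = bounded sequences of
null sequences.\<close>
definition disjoint_operator_c0 :: "('a::banach_lattice \<Rightarrow> (nat \<Rightarrow>\<^sub>C real)) \<Rightarrow> bool" where
  "disjoint_operator_c0 T \<longleftrightarrow> bounded_linear T \<and>
     (\<forall>x. (\<lambda>n. apply_bcontfun (T x) n) \<longlonglongrightarrow> 0) \<and>
     (\<forall>n m. n \<noteq> m \<longrightarrow> dual_disjoint (\<lambda>x. apply_bcontfun (T x) n) (\<lambda>x. apply_bcontfun (T x) m))"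

end

theory Submission
  imports Defs
begin

text \<open>Every weak* null sequence \<open>(x'\<^sub>n)\<close> in \<open>E'\<close> is pointwise bounded, hence uniformly
  bounded by the uniform boundedness principle, so \<open>x \<mapsto> (x'\<^sub>n x)\<^sub>n\<close> is a bounded operator
  \<open>E \<rightarrow> c\<^sub>0\<close>; conversely the coordinate functionals of an operator into \<open>c\<^sub>0\<close> form a weak* null
  sequence, and the operator is disjoint exactly when that sequence is.
  The theorem therefore reduces to the classical compactness criterion in \<open>c\<^sub>0\<close>: a bounded set
  \<open>S \<subseteq> c\<^sub>0\<close> is relatively compact iff its elements tend to zero uniformly on \<open>S\<close>. For
  \<open>S = T(A)\<close> this uniform convergence is exactly the convergence of \<open>x'\<^sub>n \<rightarrow> 0\<close> uniformly
  on \<open>A\<close>.\<close>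

lemma apply_Bcontfun_bounded_range:
  fixes f :: "nat \<Rightarrow> 'b::real_normed_vector"
  assumes "bounded (range f)"
  shows "apply_bcontfun (Bcontfun f) = f"
  using assms by (intro Bcontfun_inverse) (auto simp: bounded_iff intro: bcontfun_normI)

lemma bounded_linear_apply_bcontfun: "bounded_linear (\<lambda>g. apply_bcontfun g x)"
  by (rule bounded_linear_intro[where K = 1]) (auto simp: norm_bounded)

text \<open>The library's \<open>complete_space\<close> instance of \<open>bcontfun\<close> needs a metric domain,
  and \<open>nat\<close> carries no \<open>metric_space\<close> instance, so completeness of \<open>nat \<Rightarrow>\<^sub>C real\<close> is
  rederived for an arbitrary topological domain.\<close>

lemma Cauchy_bcontfun_convergent:
  fixes f :: "nat \<Rightarrow> ('a::topological_space \<Rightarrow>\<^sub>C 'b::complete_space)"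
  assumes "Cauchy f"
  shows "convergent f"
proof -
  obtain g where "uniform_limit UNIV f g sequentially"
    using uniformly_convergent_eq_cauchy[of "\<lambda>_. True" f] assms
    unfolding Cauchy_def uniform_limit_sequentially_iff
    by (metis dist_fun_lt_imp_dist_val_lt)
  from uniform_limit_bcontfunE[OF this sequentially_bot]
  show ?thesis
    by (metis convergentI)
qed

lemma complete_closure_bcontfun:
  fixes S :: "('a::topological_space \<Rightarrow>\<^sub>C 'b::complete_space) set"
  shows "complete (closure S)"
proof (rule completeI)
  fix f :: "nat \<Rightarrow> ('a \<Rightarrow>\<^sub>C 'b)"
  assume "\<forall>n. f n \<in> closure S" "Cauchy f"
  then obtain l where "f \<longlonglongrightarrow> l"
    using Cauchy_bcontfun_convergent convergent_def by blast
  with \<open>\<forall>n. f n \<in> closure S\<close> show "\<exists>l\<in>closure S. f \<longlonglongrightarrow> l"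
    using closed_sequentially[OF closed_closure] by blast
qed

definition bcontfun_unit :: "nat \<Rightarrow> (nat \<Rightarrow>\<^sub>C real)" where
  "bcontfun_unit j = Bcontfun (\<lambda>n. if n = j then 1 else 0)"

lemma apply_bcontfun_unit [simp]: "apply_bcontfun (bcontfun_unit j) n = (if n = j then 1 else 0)"
proof -
  have "range (\<lambda>n. if n = j then 1 else 0 :: real) \<subseteq> {0, 1}"
    by auto
  then show ?thesis
    unfolding bcontfun_unit_def
    by (subst apply_Bcontfun_bounded_range) (auto intro: bounded_subset[OF finite_imp_bounded])
qed

definition bcontfun_truncate :: "nat \<Rightarrow> (nat \<Rightarrow>\<^sub>C real) \<Rightarrow> (nat \<Rightarrow>\<^sub>C real)" where
  "bcontfun_truncate N g = Bcontfun (\<lambda>n. if n < N then apply_bcontfun g n else 0)"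

lemma apply_bcontfun_truncate [simp]:
  "apply_bcontfun (bcontfun_truncate N g) n = (if n < N then apply_bcontfun g n else 0)"
proof -
  have "range (\<lambda>n. if n < N then apply_bcontfun g n else 0)
      \<subseteq> insert 0 (apply_bcontfun g ` {..<N})"
    by auto
  then show ?thesis
    unfolding bcontfun_truncate_def
    by (subst apply_Bcontfun_bounded_range) (auto intro: bounded_subset[OF finite_imp_bounded])
qed

definition truncated_cube :: "real \<Rightarrow> nat \<Rightarrow> (nat \<Rightarrow>\<^sub>C real) set" where
  "truncated_cube R N = {g. (\<forall>n. \<bar>apply_bcontfun g n\<bar> \<le> R) \<and> (\<forall>n\<ge>N. apply_bcontfun g n = 0)}"

lemma compact_truncated_cube: "compact (truncated_cube R N)"
proof (induction N)
  case 0
  have "truncated_cube R 0 \<subseteq> {0}"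
    by (auto simp: truncated_cube_def intro!: bcontfun_eqI)
  then show ?case
    by (meson finite.emptyI finite_imp_compact finite_insert finite_subset)
next
  case (Suc N)
  let ?extend = "\<lambda>(h, t). h + t *\<^sub>R bcontfun_unit N"
  have "truncated_cube R (Suc N) = ?extend ` (truncated_cube R N \<times> {-R..R})"
  proof (intro set_eqI iffI)
    fix g assume g: "g \<in> truncated_cube R (Suc N)"
    have "\<bar>apply_bcontfun g N\<bar> \<le> R"
      using g by (simp add: truncated_cube_def)
    moreover have "g - apply_bcontfun g N *\<^sub>R bcontfun_unit N \<in> truncated_cube R N"
      using g by (auto simp: truncated_cube_def)
    ultimately have "(g - apply_bcontfun g N *\<^sub>R bcontfun_unit N, apply_bcontfun g N)
        \<in> truncated_cube R N \<times> {-R..R}"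
      by auto
    then show "g \<in> ?extend ` (truncated_cube R N \<times> {-R..R})"
      by (force intro: rev_image_eqI)
  qed (auto simp: truncated_cube_def abs_le_iff)
  moreover have "compact (?extend ` (truncated_cube R N \<times> {-R..R}))"
    unfolding case_prod_unfold
    by (intro compact_continuous_image compact_Times Suc.IH compact_Icc continuous_intros)
  ultimately show ?case
    by simp
qed

lemma bcontfun_truncate_in_truncated_cube:
  assumes "norm g \<le> R"
  shows "bcontfun_truncate N g \<in> truncated_cube R N"
proof -
  have "\<bar>apply_bcontfun g n\<bar> \<le> R" for n
    using norm_bounded[of g n] assms by simp
  then show ?thesis
    using order_trans[OF abs_ge_zero] by (auto simp: truncated_cube_def)
qed

lemma compact_closure_if_uniformly_null:
  fixes S :: "(nat \<Rightarrow>\<^sub>C real) set"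
  assumes "bounded S" and null: "uniform_limit S (\<lambda>n g. apply_bcontfun g n) (\<lambda>_. 0) sequentially"
  shows "compact (closure S)"
  unfolding compact_eq_totally_bounded
proof (intro conjI allI impI)
  show "complete (closure S)"
    by (rule complete_closure_bcontfun)
  fix e :: real assume "e > 0"
  obtain N where N: "\<And>n g. n \<ge> N \<Longrightarrow> g \<in> S \<Longrightarrow> \<bar>apply_bcontfun g n\<bar> < e / 4"
    using null \<open>e > 0\<close> unfolding uniform_limit_sequentially_iff
    by (metis dist_real_def diff_zero zero_less_divide_iff zero_less_numeral)
  obtain R where R: "\<And>g. g \<in> S \<Longrightarrow> norm g \<le> R"
    using \<open>bounded S\<close> by (auto simp: bounded_iff)
  obtain k where k: "finite k" "truncated_cube R N \<subseteq> (\<Union>c\<in>k. ball c (e / 4))"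
    using compact_truncated_cube[of R N] \<open>e > 0\<close> unfolding compact_eq_totally_bounded
    by (meson zero_less_divide_iff zero_less_numeral)
  have "S \<subseteq> (\<Union>c\<in>k. cball c (e / 2))"
  proof
    fix g assume "g \<in> S"
    define p where "p = bcontfun_truncate N g"
    have "p \<in> truncated_cube R N"
      unfolding p_def using R[OF \<open>g \<in> S\<close>] by (rule bcontfun_truncate_in_truncated_cube)
    then obtain c where "c \<in> k" "dist c p < e / 4"
      using k by auto
    moreover have "dist g p \<le> e / 4"
      using N[OF _ \<open>g \<in> S\<close>] \<open>e > 0\<close>
      by (intro dist_bound) (auto simp: p_def dist_real_def less_imp_le)
    ultimately show "g \<in> (\<Union>c\<in>k. cball c (e / 2))"
      using dist_triangle[of c g p] by (intro UN_I[of c]) (auto simp: dist_commute)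
  qed
  then have "closure S \<subseteq> (\<Union>c\<in>k. cball c (e / 2))"
    using \<open>finite k\<close> by (intro closure_minimal closed_UN) auto
  also have "\<dots> \<subseteq> (\<Union>c\<in>k. ball c e)"
    using \<open>e > 0\<close> by (intro UN_mono) auto
  finally show "\<exists>k. finite k \<and> closure S \<subseteq> (\<Union>c\<in>k. ball c e)"
    using \<open>finite k\<close> by blast
qed

lemma uniformly_null_if_compact_closure:
  fixes S :: "(nat \<Rightarrow>\<^sub>C real) set"
  assumes "compact (closure S)" and null: "\<And>g. g \<in> S \<Longrightarrow> apply_bcontfun g \<longlonglongrightarrow> 0"
  shows "uniform_limit S (\<lambda>n g. apply_bcontfun g n) (\<lambda>_. 0) sequentially"
  unfolding uniform_limit_iff
proof (intro allI impI)
  fix e :: real assume "e > 0"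
  have "closure S \<subseteq> (\<Union>g\<in>S. ball g (e / 2))"
  proof
    fix z assume "z \<in> closure S"
    then obtain g where "g \<in> S" "dist g z < e / 2"
      using \<open>e > 0\<close> closure_approachable half_gt_zero by blast
    then show "z \<in> (\<Union>g\<in>S. ball g (e / 2))"
      by auto
  qed
  then obtain D where D: "D \<subseteq> S" "finite D" "closure S \<subseteq> (\<Union>d\<in>D. ball d (e / 2))"
    using compactE_image[OF \<open>compact (closure S)\<close>, of S "\<lambda>g. ball g (e / 2)"] by auto
  have "\<forall>d\<in>D. \<forall>\<^sub>F n in sequentially. dist (apply_bcontfun d n) 0 < e / 2"
    using D(1) null \<open>e > 0\<close> by (metis half_gt_zero subsetD tendstoD)
  then have "\<forall>\<^sub>F n in sequentially. \<forall>d\<in>D. dist (apply_bcontfun d n) 0 < e / 2"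
    using \<open>finite D\<close> by (rule eventually_ball_finite[rotated])
  then show "\<forall>\<^sub>F n in sequentially. \<forall>g\<in>S. dist (apply_bcontfun g n) 0 < e"
  proof (rule eventually_mono, intro ballI)
    fix n g assume small: "\<forall>d\<in>D. dist (apply_bcontfun d n) 0 < e / 2" and "g \<in> S"
    then obtain d where "d \<in> D" "dist d g < e / 2"
      using D(3) closure_subset by force
    then have "dist (apply_bcontfun d n) (apply_bcontfun g n) < e / 2"
      using dist_fun_lt_imp_dist_val_lt by blast
    moreover have "dist (apply_bcontfun d n) 0 < e / 2"
      using small \<open>d \<in> D\<close> by blast
    ultimately show "dist (apply_bcontfun g n) 0 < e"
      by (rule dist_triangle_half_r)
  qed
qed

lemma compact_closure_c0_iff:
  fixes S :: "(nat \<Rightarrow>\<^sub>C real) set"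
  assumes "\<And>g. g \<in> S \<Longrightarrow> apply_bcontfun g \<longlonglongrightarrow> 0"
  shows "compact (closure S) \<longleftrightarrow>
           bounded S \<and> uniform_limit S (\<lambda>n g. apply_bcontfun g n) (\<lambda>_. 0) sequentially"
proof
  assume "compact (closure S)"
  then show "bounded S \<and> uniform_limit S (\<lambda>n g. apply_bcontfun g n) (\<lambda>_. 0) sequentially"
    using assms bounded_subset[OF compact_imp_bounded closure_subset] uniformly_null_if_compact_closure
    by blast
qed (use compact_closure_if_uniformly_null in blast)

lemma compact_closure_image_c0_iff:
  fixes T :: "'a \<Rightarrow> (nat \<Rightarrow>\<^sub>C real)"
  assumes "\<And>x. apply_bcontfun (T x) \<longlonglongrightarrow> 0"
  shows "compact (closure (T ` A)) \<longleftrightarrow>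
           bounded (T ` A) \<and> uniform_limit A (\<lambda>n x. apply_bcontfun (T x) n) (\<lambda>_. 0) sequentially"
proof -
  have "\<And>g. g \<in> T ` A \<Longrightarrow> apply_bcontfun g \<longlonglongrightarrow> 0"
    using assms by blast
  then show ?thesis
    by (simp only: compact_closure_c0_iff) (simp add: uniform_limit_iff)
qed

lemma uniform_boundedness:
  fixes f :: "'i \<Rightarrow> 'a::banach \<Rightarrow> 'b::real_normed_vector"
  assumes lin: "\<And>i. bounded_linear (f i)" and pointwise: "\<And>x. bounded (range (\<lambda>i. f i x))"
  shows "\<exists>M. \<forall>i x. norm (f i x) \<le> M * norm x"
proof -
  define F where "F k = (\<Inter>i. {x. norm (f i x) \<le> real k})" for k :: nat
  have "closed (F k)" for k
    unfolding F_def using lin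
    by (intro closed_INT ballI closed_Collect_le continuous_intros) (simp add: linear_continuous_on)
  moreover have "(\<Union>k. F k) = UNIV"
  proof (intro set_eqI iffI UNIV_I)
    fix x
    obtain B where "\<And>i. norm (f i x) \<le> B"
      using pointwise[of x] by (auto simp: bounded_iff)
    then have "x \<in> F (nat \<lceil>B\<rceil>)"
      unfolding F_def by (auto intro: order_trans real_nat_ceiling_ge)
    then show "x \<in> (\<Union>k. F k)"
      by blast
  qed
  ultimately obtain k where "interior (F k) \<noteq> {}"
    using Baire_category_alt[of euclidean "range F"]
    by (auto simp: completely_metrizable_space_euclidean interior_of_def interior_def)
  then obtain x0 r where "r > 0" and ball: "ball x0 r \<subseteq> F k"
    by (meson ex_in_conv mem_interior)
  have "norm (f i x) \<le> (4 * real k / r) * norm x" for i x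
  proof (cases "x = 0")
    case True
    then show ?thesis
      using lin[of i] by (simp add: linear_simps)
  next
    case False
    define c where "c = r / (2 * norm x)"
    have "c > 0" "norm (c *\<^sub>R x) < r"
      using False \<open>r > 0\<close> by (auto simp: c_def)
    then have "x0 + c *\<^sub>R x \<in> F k" "x0 \<in> F k"
      using ball \<open>r > 0\<close> by (auto simp: dist_norm)
    then have "norm (f i (x0 + c *\<^sub>R x)) \<le> real k" "norm (f i x0) \<le> real k"
      unfolding F_def by blast+
    moreover have "f i (x0 + c *\<^sub>R x) = f i x0 + c *\<^sub>R f i x"
      using lin[of i] by (simp add: linear_simps)
    ultimately have "c * norm (f i x) \<le> 2 * real k"
      using norm_triangle_ineq4[of "f i (x0 + c *\<^sub>R x)" "f i x0"] \<open>c > 0\<close> by simp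
    then show ?thesis
      using False \<open>r > 0\<close> by (simp add: c_def field_simps)
  qed
  then show ?thesis
    by blast
qed

lemma bounded_linear_Bcontfun:
  fixes x' :: "nat \<Rightarrow> 'a::banach \<Rightarrow> 'b::real_normed_vector"
  assumes lin: "\<And>n. bounded_linear (x' n)" and pointwise: "\<And>x. bounded (range (\<lambda>n. x' n x))"
  shows "bounded_linear (\<lambda>x. Bcontfun (\<lambda>n. x' n x))"
proof -
  define T where "T x = Bcontfun (\<lambda>n. x' n x)" for x
  have T: "apply_bcontfun (T x) n = x' n x" for x n
    using apply_Bcontfun_bounded_range[OF pointwise] by (simp add: T_def)
  obtain M where M: "\<And>n x. norm (x' n x) \<le> M * norm x"
    using uniform_boundedness[OF lin pointwise] by blast
  have "bounded_linear T"
  proof (rule bounded_linear_intro[where K = M])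
    show "T (x + y) = T x + T y" for x y
      using lin by (intro bcontfun_eqI) (simp add: T linear_simps)
    show "T (r *\<^sub>R x) = r *\<^sub>R T x" for r x
      using lin by (intro bcontfun_eqI) (simp add: T linear_simps)
    show "norm (T x) \<le> norm x * M" for x
      using M by (intro norm_bound) (simp add: T mult.commute)
  qed
  then show ?thesis
    by (simp add: T_def[abs_def])
qed

definition disjoint_weak_star_null :: "(nat \<Rightarrow> 'a::banach_lattice \<Rightarrow> real) \<Rightarrow> bool" where
  "disjoint_weak_star_null x' \<longleftrightarrow>
     (\<forall>n. bounded_linear (x' n)) \<and> (\<forall>x. (\<lambda>n. x' n x) \<longlonglongrightarrow> 0) \<and>
     (\<forall>n m. n \<noteq> m \<longrightarrow> dual_disjoint (x' n) (x' m))"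

lemma almost_limited_iff_uniform_limit:
  "almost_limited A \<longleftrightarrow>
     bounded A \<and> (\<forall>x'. disjoint_weak_star_null x' \<longrightarrow> uniform_limit A x' (\<lambda>_. 0) sequentially)"
  unfolding almost_limited_def disjoint_weak_star_null_def uniform_limit_sequentially_iff
  by (simp add: dist_real_def)

lemma disjoint_operator_c0_iff:
  "disjoint_operator_c0 T \<longleftrightarrow>
     bounded_linear T \<and> disjoint_weak_star_null (\<lambda>n x. apply_bcontfun (T x) n)"
  unfolding disjoint_operator_c0_def disjoint_weak_star_null_def
  using bounded_linear_compose[OF bounded_linear_apply_bcontfun] by blast

lemma disjoint_operator_c0_with_coordinates:
  assumes "disjoint_weak_star_null x'"
  obtains T where "disjoint_operator_c0 T" and "\<And>x n. apply_bcontfun (T x) n = x' n x"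
proof -
  have lin: "\<And>n. bounded_linear (x' n)" and pointwise: "\<And>x. bounded (range (\<lambda>n. x' n x))"
    using assms convergent_imp_bounded by (auto simp: disjoint_weak_star_null_def)
  have "apply_bcontfun (Bcontfun (\<lambda>n. x' n x)) n = x' n x" for x n
    using apply_Bcontfun_bounded_range[OF pointwise] by simp
  with assms bounded_linear_Bcontfun[OF lin pointwise] show ?thesis
    by (intro that[of "\<lambda>x. Bcontfun (\<lambda>n. x' n x)"]) (simp_all add: disjoint_operator_c0_iff)
qed

theorem mainTheorem6:
  fixes A :: "'a::banach_lattice set"
  assumes "bounded A"
  shows "almost_limited A \<longleftrightarrow>
    (\<forall>T :: 'a \<Rightarrow> (nat \<Rightarrow>\<^sub>C real). disjoint_operator_c0 T \<longrightarrow> compact (closure (T ` A)))"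
proof (intro iffI allI impI)
  fix T :: "'a \<Rightarrow> (nat \<Rightarrow>\<^sub>C real)"
  assume "almost_limited A" and T: "disjoint_operator_c0 T"
  then have "uniform_limit A (\<lambda>n x. apply_bcontfun (T x) n) (\<lambda>_. 0) sequentially"
    by (simp add: almost_limited_iff_uniform_limit disjoint_operator_c0_iff)
  moreover have "bounded (T ` A)"
    using T assms by (simp add: disjoint_operator_c0_iff bounded_linear_image)
  ultimately show "compact (closure (T ` A))"
    using T by (simp add: compact_closure_image_c0_iff disjoint_operator_c0_def)
next
  assume compact:
    "\<forall>T :: 'a \<Rightarrow> (nat \<Rightarrow>\<^sub>C real). disjoint_operator_c0 T \<longrightarrow> compact (closure (T ` A))"
  show "almost_limited A"
    unfolding almost_limited_iff_uniform_limit
  proof (intro conjI assms allI impI)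
    fix x' :: "nat \<Rightarrow> 'a \<Rightarrow> real"
    assume "disjoint_weak_star_null x'"
    then obtain T where T: "disjoint_operator_c0 T" "\<And>x n. apply_bcontfun (T x) n = x' n x"
      using disjoint_operator_c0_with_coordinates by blast
    have "compact (closure (T ` A))"
      using T(1) compact by blast
    then have "uniform_limit A (\<lambda>n x. apply_bcontfun (T x) n) (\<lambda>_. 0) sequentially"
      using T(1) by (simp add: compact_closure_image_c0_iff disjoint_operator_c0_def)
    then show "uniform_limit A x' (\<lambda>_. 0) sequentially"
      by (simp add: T(2))
  qed
qed

end
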